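(* Let $p$ be a prime, let $l,n\in\mathbb{N}$, $r,s,t\in\mathbb{Z}$ with $0\leqslant s,t<p$. Then for every integer $\alpha\geqslant 2$, $$\frac1{\lfloor n/p^{\alpha-1}\rfloor!}\sum_{k\equiv r\ (\mathrm{mod}\ p^{\alpha})}\binom{pn+s}{pk+t}(-1)^{pk}\Big(\frac{k-r}{p^{\alpha-1}}\Big)^l\equiv\frac1{\lfloor n/p^{\alpha-1}\rfloor!}\sum_{k\equiv r\ (\mathrm{mod}\ p^{\alpha})}\binom nk\binom st(-1)^k\Big(\frac{k-r}{p^{\alpha-1}}\Big)^l\pmod p.$$
   Context: Sums run over all integers $k$ in the indicated residue class; $\binom{N}{j}=0$ unless $0\le j\le N$. For rationals $u,v$, $u\equiv v\pmod p$ means $\operatorname{ord}_p(u-v)\ge 1$, where $\operatorname{ord}_p$ is the $p$-adic order. *)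

theory Defs
  imports "HOL-Number_Theory.Number_Theory"
begin

definition ibinom :: "int \<Rightarrow> int \<Rightarrow> int" where
  "ibinom N j = (if 0 \<le> j \<and> j \<le> N then int (nat N choose nat j) else 0)"

text \<open>Sum of a finitely supported function over all integers k in the residue class r mod m
  (i.e. over the support of f inside the class).\<close>
definition class_sum :: "(int \<Rightarrow> rat) \<Rightarrow> int \<Rightarrow> int \<Rightarrow> rat" where
  "class_sum f r m = sum f {k. [k = r] (mod m) \<and> f k \<noteq> 0}"

text \<open>Congruence of rationals mod p: ord_p(u - v) >= 1, i.e. p divides the numerator
  of u - v in lowest terms (u = v counts, ord_p 0 = infinity).\<close>
definition qcong :: "rat \<Rightarrow> rat \<Rightarrow> int \<Rightarrow> bool" where
  "qcong u v p = (p dvd fst (quotient_of (u - v)))"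

end

theory Submission
  imports Defs "HOL-Computational_Algebra.Polynomial"
begin

(* Put r' = p r + t and let L be the linear functional on \<rat>[x] sending x^K to
   ((K - r') / p^\<alpha>)^l if K \<equiv> r' (mod p^(\<alpha>+1)) and to 0 otherwise. Up to the common sign
   (-1)^t, the two class sums are L((1-x)^(pn+s)) and L((1-x)^s (1-x^p)^n).

   Let z = x^(p^(\<alpha>+1)) - 1 and let A be the \<int>_(p)[x]-span of the divided powers
   z^i / (p^i i!). L is p-integral on A: L(x^d z^i) is p^l times an i-th finite difference of
   a polynomial of degree l, hence divisible by p^l i! and zero for i > l.
   In the ideal J of A generated by p, u = x^(p^\<alpha>) - 1 and the z^i / (p^i i!) with i \<ge> 1 every
   p-th power lies in pJ, so w^N \<in> p^(v_p(N!)) A for w \<in> J. Since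
   (1-x^p)^(p^(\<alpha>-1)) \<in> J, a binomial expansion gives, for N = \<lfloor>n/p^(\<alpha>-1)\<rfloor>,
     (1-x)^(pn+s) \<equiv> (1-x)^s (1-x^p)^n  (mod p^(v_p(N!)+1) A),
   and applying L and dividing by N! yields the congruence. *)

section \<open>p-integral rationals\<close>

definition p_integral :: "nat \<Rightarrow> rat \<Rightarrow> bool" where
  "p_integral p x \<longleftrightarrow> (\<exists>a b. b \<noteq> 0 \<and> \<not> int p dvd b \<and> x = of_int a / of_int b)"

lemma p_integral_of_int [simp]: "prime p \<Longrightarrow> p_integral p (of_int k)"
  unfolding p_integral_def
  by (rule exI[of _ k], rule exI[of _ 1]) (auto simp: prime_gt_1_nat)

lemma p_integral_of_nat [simp]: "prime p \<Longrightarrow> p_integral p (of_nat k)"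
  using p_integral_of_int[of p "int k"] by simp

lemma p_integral_0 [simp]: "prime p \<Longrightarrow> p_integral p 0"
  and p_integral_1 [simp]: "prime p \<Longrightarrow> p_integral p 1"
  using p_integral_of_int[of p 0] p_integral_of_int[of p 1] by simp_all

lemma p_integral_add:
  assumes "prime p" "p_integral p x" "p_integral p y"
  shows "p_integral p (x + y)"
proof -
  from assms(2) obtain a b where ab: "b \<noteq> 0" "\<not> int p dvd b" "x = of_int a / of_int b"
    unfolding p_integral_def by blast
  from assms(3) obtain c d where cd: "d \<noteq> 0" "\<not> int p dvd d" "y = of_int c / of_int d"
    unfolding p_integral_def by blast
  have "\<not> int p dvd b * d" using ab cd assms(1) by (simp add: prime_dvd_mult_iff)
  moreover have "x + y = of_int (a * d + c * b) / of_int (b * d)"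
    using ab cd by (simp add: field_simps)
  ultimately show ?thesis unfolding p_integral_def using ab cd
    by (intro exI[of _ "a * d + c * b"] exI[of _ "b * d"]) auto
qed

lemma p_integral_mult:
  assumes "prime p" "p_integral p x" "p_integral p y"
  shows "p_integral p (x * y)"
proof -
  from assms(2) obtain a b where ab: "b \<noteq> 0" "\<not> int p dvd b" "x = of_int a / of_int b"
    unfolding p_integral_def by blast
  from assms(3) obtain c d where cd: "d \<noteq> 0" "\<not> int p dvd d" "y = of_int c / of_int d"
    unfolding p_integral_def by blast
  have "\<not> int p dvd b * d" using ab cd assms(1) by (simp add: prime_dvd_mult_iff)
  moreover have "x * y = of_int (a * c) / of_int (b * d)"
    using ab cd by (simp add: field_simps)
  ultimately show ?thesis unfolding p_integral_def using ab cd
    by (intro exI[of _ "a * c"] exI[of _ "b * d"]) auto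
qed

lemma p_integral_sum:
  assumes "prime p" "\<And>i. i \<in> S \<Longrightarrow> p_integral p (f i)"
  shows "p_integral p (sum f S)"
  using assms(2)
proof (induction S rule: infinite_finite_induct)
  case (insert x F)
  thus ?case using p_integral_add[OF assms(1)] by simp
qed (use assms in auto)

lemma p_integral_power:
  assumes "prime p" "p_integral p x"
  shows "p_integral p (x ^ n)"
  by (induction n) (use assms p_integral_mult in auto)

lemma p_integral_divide_of_int:
  assumes "prime p" "p_integral p x" "\<not> int p dvd c"
  shows "p_integral p (x / of_int c)"
proof -
  from assms(2) obtain a b where ab: "b \<noteq> 0" "\<not> int p dvd b" "x = of_int a / of_int b"
    unfolding p_integral_def by blast
  have "c \<noteq> 0" using assms(3) by auto
  moreover have "\<not> int p dvd b * c" using ab assms(1,3) by (simp add: prime_dvd_mult_iff)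
  moreover have "x / of_int c = of_int a / of_int (b * c)"
    using ab by simp
  ultimately show ?thesis unfolding p_integral_def using ab
    by (intro exI[of _ a] exI[of _ "b * c"]) auto
qed

lemma prime_dvd_numerator_of_p_integral:
  assumes "prime p" "p_integral p y"
  shows "int p dvd fst (quotient_of (of_nat p * y))"
proof -
  from assms(2) obtain a b where ab: "b \<noteq> 0" "\<not> int p dvd b" "y = of_int a / of_int b"
    unfolding p_integral_def by blast
  obtain A B where AB: "quotient_of (of_nat p * y) = (A, B)"
    by (cases "quotient_of (of_nat p * y)")
  have "B > 0" using quotient_of_denom_pos[OF AB] .
  moreover have "of_int (int p * a) / of_int b = (of_int A / of_int B :: rat)"
    using quotient_of_div[OF AB] ab by simp
  ultimately have "of_int (int p * a * B) = (of_int (A * b) :: rat)"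
    using ab by (simp add: field_simps)
  hence "int p * a * B = A * b" by (simp only: of_int_eq_iff)
  hence "int p dvd A * b" by (metis dvd_triv_left mult.assoc)
  hence "int p dvd A" using ab(2) assms(1) by (simp add: prime_dvd_mult_iff)
  thus ?thesis using AB by simp
qed

section \<open>The p-adic valuation of factorials\<close>

lemma fact_eq_prime_power_mult_fact_div:
  assumes "prime p"
  obtains c where "fact N = p ^ (N div p) * fact (N div p) * c" "\<not> p dvd c"
proof -
  have "\<exists>c. fact N = p ^ (N div p) * fact (N div p) * c \<and> \<not> p dvd c"
  proof (induction N)
    case 0
    thus ?case using assms by (intro exI[of _ 1]) (auto simp: prime_gt_1_nat)
  next
    case (Suc N)
    then obtain c where c: "fact N = p ^ (N div p) * fact (N div p) * c" "\<not> p dvd c" by blast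
    have p1: "p > 1" using assms prime_gt_1_nat by blast
    show ?case
    proof (cases "p dvd Suc N")
      case True
      hence e: "Suc N div p = Suc (N div p)" using p1 by (simp add: div_Suc dvd_eq_mod_eq_0)
      hence "Suc N = p * Suc (N div p)" using True by (metis dvd_mult_div_cancel)
      hence "fact (Suc N) = p ^ (Suc N div p) * fact (Suc N div p) * c"
        unfolding e fact_Suc[of N] using c(1) by (simp add: algebra_simps)
      thus ?thesis using c by blast
    next
      case False
      hence "Suc N div p = N div p" by (simp add: div_Suc dvd_eq_mod_eq_0)
      hence "fact (Suc N) = p ^ (Suc N div p) * fact (Suc N div p) * (Suc N * c)"
        using c by (simp add: algebra_simps)
      moreover have "\<not> p dvd Suc N * c"
        using False c(2) assms by (simp only: prime_dvd_mult_iff) simp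
      ultimately show ?thesis by blast
    qed
  qed
  thus ?thesis using that by blast
qed

lemma multiplicity_fact_rec:
  assumes "prime p"
  shows "multiplicity p (fact N) = N div p + multiplicity p (fact (N div p) :: nat)"
proof -
  obtain c where c: "fact N = p ^ (N div p) * fact (N div p) * c" "\<not> p dvd c"
    using fact_eq_prime_power_mult_fact_div[OF assms] .
  obtain c' where c': "fact (N div p) = p ^ multiplicity p (fact (N div p) :: nat) * c'"
    "\<not> p dvd c'"
    by (metis multiplicity_decompose' fact_nonzero not_prime_unit assms)
  have "fact N = p ^ (N div p + multiplicity p (fact (N div p) :: nat)) * (c' * c)"
    using c(1) c'(1) by (simp add: power_add mult_ac)
  moreover have "\<not> p dvd c' * c" using c(2) c'(2) assms by (simp add: prime_dvd_mult_iff)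
  ultimately show ?thesis using assms by (intro multiplicity_decomposeI) auto
qed

lemma multiplicity_fact_less:
  assumes "prime p" "j \<ge> 1"
  shows "multiplicity p (fact j :: nat) < j"
  using assms(2)
proof (induction j rule: less_induct)
  case (less j)
  have p1: "p > 1" using assms(1) prime_gt_1_nat by blast
  show ?case
  proof (cases "j div p = 0")
    case True
    thus ?thesis using less.prems by (simp add: multiplicity_fact_rec[OF assms(1), of j])
  next
    case False
    have "multiplicity p (fact (j div p) :: nat) < j div p"
      using less.IH[of "j div p"] less.prems False p1 by simp
    moreover have "2 * (j div p) \<le> j"
    proof -
      have "2 * (j div p) \<le> p * (j div p)" using p1 by (intro mult_le_mono1) simp
      also have "\<dots> \<le> j" by (metis le_add1 mult_div_mod_eq)
      finally show ?thesis .
    qed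
    ultimately show ?thesis by (simp add: multiplicity_fact_rec[OF assms(1), of j])
  qed
qed

lemma prime_power_dvd_choose_mult:
  assumes "prime p" "1 \<le> j" "j \<le> N"
  shows "p ^ (multiplicity p (fact N :: nat) + 1) dvd
    (N choose j) * p ^ j * p ^ multiplicity p (fact (N - j) :: nat)"
proof -
  define v where "v m = multiplicity p (fact m :: nat)" for m
  have decomp: "\<exists>c. fact m = p ^ v m * c \<and> coprime (p ^ v N) c" for m
  proof -
    obtain c where c: "fact m = p ^ v m * c" "\<not> p dvd c"
      unfolding v_def by (metis multiplicity_decompose' fact_nonzero not_prime_unit assms(1))
    have "coprime p c" using c(2) assms(1) by (simp add: prime_imp_coprime)
    thus ?thesis using c(1) by (auto intro: coprime_power_left_iff[THEN iffD2])
  qed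
  obtain c1 where c1: "fact j = p ^ v j * c1" "coprime (p ^ v N) c1" using decomp by blast
  obtain c2 where c2: "fact (N - j) = p ^ v (N - j) * c2" "coprime (p ^ v N) c2"
    using decomp by blast
  have "p ^ v N dvd fact N" unfolding v_def by (rule multiplicity_dvd)
  also have "fact N = ((N choose j) * p ^ v j * p ^ v (N - j)) * (c1 * c2)"
    using binomial_fact_lemma[OF assms(3)] c1(1) c2(1) by (simp add: mult_ac)
  finally have "p ^ v N dvd (N choose j) * p ^ v j * p ^ v (N - j)"
    using c1(2) c2(2) by (simp add: coprime_dvd_mult_left_iff)
  hence "p ^ v N * p ^ (j - v j) dvd (N choose j) * p ^ v j * p ^ v (N - j) * p ^ (j - v j)"
    by (rule mult_dvd_mono) simp
  moreover have "v j < j" unfolding v_def using multiplicity_fact_less[OF assms(1,2)] .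
  ultimately have "p ^ (v N + (j - v j)) dvd (N choose j) * p ^ j * p ^ v (N - j)"
    by (simp add: power_add[symmetric] mult_ac)
  moreover have "p ^ (v N + 1) dvd p ^ (v N + (j - v j))"
    using \<open>v j < j\<close> by (intro le_imp_power_dvd) simp
  ultimately show ?thesis unfolding v_def by (meson dvd_trans)
qed

section \<open>Finite differences of powers\<close>

definition finite_diff_pow :: "nat \<Rightarrow> nat \<Rightarrow> int \<Rightarrow> int" where
  "finite_diff_pow i l c = (\<Sum>h\<le>i. int (i choose h) * (-1) ^ (i - h) * (c + int h) ^ l)"

lemma finite_diff_pow_0_right: "finite_diff_pow i 0 c = 0 ^ i"
  using binomial_ring[of 1 "-1 :: int" i] by (simp add: finite_diff_pow_def)

lemma finite_diff_pow_Suc: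
  "finite_diff_pow (Suc j) (Suc l) c =
    c * finite_diff_pow (Suc j) l c + int (Suc j) * finite_diff_pow j l (c + 1)"
proof -
  have "finite_diff_pow (Suc j) (Suc l) c =
      (\<Sum>h\<le>Suc j. c * (int (Suc j choose h) * (-1) ^ (Suc j - h) * (c + int h) ^ l)) +
      (\<Sum>h\<le>Suc j. int h * int (Suc j choose h) * (-1) ^ (Suc j - h) * (c + int h) ^ l)"
    unfolding finite_diff_pow_def by (simp add: sum.distrib[symmetric] algebra_simps)
  also have "(\<Sum>h\<le>Suc j. c * (int (Suc j choose h) * (-1) ^ (Suc j - h) * (c + int h) ^ l)) =
      c * finite_diff_pow (Suc j) l c"
    unfolding finite_diff_pow_def by (simp only: sum_distrib_left)
  also have "(\<Sum>h\<le>Suc j. int h * int (Suc j choose h) * (-1) ^ (Suc j - h) * (c + int h) ^ l) =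
      (\<Sum>h\<le>j. int (Suc h) * int (Suc j choose Suc h) * (-1) ^ (Suc j - Suc h) *
        (c + int (Suc h)) ^ l)"
    by (subst sum.atMost_Suc_shift) simp
  also have "\<dots> = (\<Sum>h\<le>j. int (Suc j) * (int (j choose h) * (-1) ^ (j - h) * ((c + 1) + int h) ^ l))"
  proof (rule sum.cong[OF refl])
    fix h
    have "int (Suc h) * int (Suc j choose Suc h) = int (Suc j) * int (j choose h)"
      using Suc_times_binomial[of h j] by (metis of_nat_mult)
    thus "int (Suc h) * int (Suc j choose Suc h) * (-1) ^ (Suc j - Suc h) * (c + int (Suc h)) ^ l =
        int (Suc j) * (int (j choose h) * (-1) ^ (j - h) * ((c + 1) + int h) ^ l)"
      by (simp add: algebra_simps)
  qed
  also have "\<dots> = int (Suc j) * finite_diff_pow j l (c + 1)"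
    unfolding finite_diff_pow_def by (simp add: sum_distrib_left)
  finally show ?thesis .
qed

lemma finite_diff_pow_eq_0: "l < i \<Longrightarrow> finite_diff_pow i l c = 0"
proof (induction l arbitrary: i c)
  case 0
  thus ?case by (simp add: finite_diff_pow_0_right)
next
  case (Suc l)
  then obtain j where "i = Suc j" "l < j" by (cases i) auto
  thus ?case using Suc.IH by (simp add: finite_diff_pow_Suc)
qed

lemma fact_dvd_finite_diff_pow: "fact i dvd finite_diff_pow i l c"
proof (induction l arbitrary: i c)
  case 0
  thus ?case by (cases i) (simp_all add: finite_diff_pow_0_right)
next
  case (Suc l)
  show ?case
  proof (cases i)
    case (Suc j)
    have "fact (Suc j) dvd int (Suc j) * finite_diff_pow j l (c + 1)"
      using Suc.IH[of j "c + 1"] by (simp add: fact_Suc mult_dvd_mono)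
    thus ?thesis using Suc.IH[of i c] Suc by (simp add: finite_diff_pow_Suc)
  qed simp
qed

section \<open>Binomial expansions\<close>

lemma add_power_prime:
  fixes x y :: "'a::comm_ring_1"
  assumes "prime p"
  shows "(x + y) ^ p = x ^ p + y ^ p +
    of_nat p * (\<Sum>k\<in>{1..<p}. of_nat ((p choose k) div p) * x ^ k * y ^ (p - k))"
proof -
  have p1: "p > 1" using assms prime_gt_1_nat by blast
  have "{..p} = insert p (insert 0 {1..<p})" using p1 by auto
  hence "(x + y) ^ p = x ^ p + y ^ p + (\<Sum>k\<in>{1..<p}. of_nat (p choose k) * x ^ k * y ^ (p - k))"
    using p1 by (simp add: binomial_ring[of x y p] add_ac)
  also have "(\<Sum>k\<in>{1..<p}. of_nat (p choose k) * x ^ k * y ^ (p - k)) =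
      of_nat p * (\<Sum>k\<in>{1..<p}. of_nat ((p choose k) div p) * x ^ k * y ^ (p - k))"
    unfolding sum_distrib_left
  proof (rule sum.cong[OF refl])
    fix k assume "k \<in> {1..<p}"
    hence "p choose k = p * ((p choose k) div p)"
      using dvd_choose_prime[of k p] assms by auto
    hence "(of_nat (p choose k) :: 'a) = of_nat p * of_nat ((p choose k) div p)"
      by (metis of_nat_mult)
    thus "of_nat (p choose k) * x ^ k * y ^ (p - k) =
        of_nat p * (of_nat ((p choose k) div p) * x ^ k * y ^ (p - k))"
      by (simp add: mult_ac)
  qed
  finally show ?thesis .
qed

lemma one_minus_monom_power:
  "(1 - monom 1 e :: 'a::comm_ring_1 poly) ^ N =
    (\<Sum>K\<le>N. monom (of_nat (N choose K) * (-1) ^ K) (e * K))"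
proof -
  have "(1 - monom 1 e :: 'a poly) ^ N = (- monom 1 e + 1) ^ N" by simp
  also have "\<dots> = (\<Sum>K\<le>N. of_nat (N choose K) * (- monom 1 e) ^ K * 1 ^ (N - K))"
    by (rule binomial_ring)
  also have "\<dots> = (\<Sum>K\<le>N. monom (of_nat (N choose K) * (-1) ^ K) (e * K))"
  proof (rule sum.cong[OF refl])
    fix K
    have "(- monom 1 e :: 'a poly) ^ K = smult ((-1) ^ K) (monom 1 (e * K))"
      by (induction K) (auto simp: mult_monom algebra_simps)
    thus "of_nat (N choose K) * (- monom 1 e) ^ K * 1 ^ (N - K) =
        monom (of_nat (N choose K) * (-1) ^ K :: 'a) (e * K)"
      by (simp add: of_nat_mult_conv_smult smult_monom)
  qed
  finally show ?thesis .
qed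

lemma monom_minus_one_power:
  "(monom 1 e - 1 :: 'a::comm_ring_1 poly) ^ N =
    (\<Sum>h\<le>N. monom (of_nat (N choose h) * (-1) ^ (N - h)) (e * h))"
proof -
  have "(monom 1 e - 1 :: 'a poly) ^ N = (monom 1 e + (-1)) ^ N" by simp
  also have "\<dots> = (\<Sum>h\<le>N. of_nat (N choose h) * (monom 1 e) ^ h * (-1) ^ (N - h))"
    by (rule binomial_ring)
  also have "\<dots> = (\<Sum>h\<le>N. monom (of_nat (N choose h) * (-1) ^ (N - h)) (e * h))"
  proof (rule sum.cong[OF refl])
    fix h
    have "(-1 :: 'a poly) ^ k = smult ((-1) ^ k) 1" for k
      by (induction k) auto
    thus "of_nat (N choose h) * (monom 1 e) ^ h * (-1) ^ (N - h) =
        monom (of_nat (N choose h) * (-1) ^ (N - h) :: 'a) (e * h)"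
      by (simp add: monom_power of_nat_mult_conv_smult smult_monom mult.commute)
  qed
  finally show ?thesis .
qed

section \<open>Class sums\<close>

lemma ibinom_of_nat: "ibinom (int A) (int B) = int (A choose B)"
  unfolding ibinom_def by auto

lemma class_sum_eq_sum_atMost:
  assumes "\<And>k. f k \<noteq> 0 \<Longrightarrow> 0 \<le> k \<and> k \<le> int n"
  shows "class_sum f r m = (\<Sum>k\<le>n. if [int k = r] (mod m) then f (int k) else 0)"
proof -
  define T where "T = int ` {k \<in> {..n}. [int k = r] (mod m)}"
  have "(\<Sum>k\<le>n. if [int k = r] (mod m) then f (int k) else 0) =
      (\<Sum>k\<in>{k \<in> {..n}. [int k = r] (mod m)}. f (int k))"
    by (rule sum.inter_filter[symmetric]) simp
  also have "\<dots> = sum f T" unfolding T_def by (subst sum.reindex) (auto simp: inj_on_def)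
  also have "sum f T = sum f {k. [k = r] (mod m) \<and> f k \<noteq> 0}"
  proof (rule sum.mono_neutral_right)
    show "finite T" unfolding T_def by simp
    show "{k. [k = r] (mod m) \<and> f k \<noteq> 0} \<subseteq> T"
    proof
      fix k assume k: "k \<in> {k. [k = r] (mod m) \<and> f k \<noteq> 0}"
      hence "0 \<le> k" "k \<le> int n" using assms by auto
      hence "k = int (nat k)" "nat k \<in> {..n}" by auto
      thus "k \<in> T" unfolding T_def using k by (metis (mono_tags, lifting) image_eqI mem_Collect_eq)
    qed
    show "\<forall>i\<in>T - {k. [k = r] (mod m) \<and> f k \<noteq> 0}. f i = 0" unfolding T_def by auto
  qed
  finally show ?thesis unfolding class_sum_def by simp
qed

lemma sum_lessThan_mult_eq_sum_residue:
  assumes "t < p" and vanish: "\<And>K. K mod p \<noteq> t \<Longrightarrow> g K = 0"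
  shows "(\<Sum>K<Suc n * p. g K) = (\<Sum>k\<le>n. g (k * p + t))"
proof -
  have "(\<Sum>K<Suc n * p. g K) = (\<Sum>k<Suc n. \<Sum>K\<in>{k * p..<k * p + p}. g K)"
    by (rule sum.nat_group[symmetric])
  also have "\<dots> = (\<Sum>k<Suc n. g (k * p + t))"
  proof (rule sum.cong[OF refl])
    fix k
    have "(\<Sum>K\<in>{k * p..<k * p + p}. g K) = (\<Sum>K\<in>{k * p + t}. g K)"
    proof (rule sum.mono_neutral_right)
      show "\<forall>K\<in>{k * p..<k * p + p} - {k * p + t}. g K = 0"
      proof
        fix K assume "K \<in> {k * p..<k * p + p} - {k * p + t}"
        then obtain \<tau> where "K = k * p + \<tau>" "\<tau> < p" "\<tau> \<noteq> t"
          by (metis Diff_iff atLeastLessThan_iff le_Suc_ex nat_add_left_cancel_less singletonI)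
        thus "g K = 0" by (intro vanish) simp
      qed
    qed (use assms(1) in auto)
    thus "(\<Sum>K\<in>{k * p..<k * p + p}. g K) = g (k * p + t)" by simp
  qed
  finally show ?thesis by (simp add: lessThan_Suc_atMost)
qed

lemma bounds_of_mult_add_bounds:
  fixes k :: int
  assumes "0 \<le> int p * k + int t" "int p * k + int t \<le> int p * int n + int s" "t < p" "s < p"
  shows "0 \<le> k \<and> k \<le> int n"
proof
  show "0 \<le> k"
  proof (rule ccontr)
    assume "\<not> 0 \<le> k"
    hence "int p * k \<le> int p * (-1)" by (intro mult_left_mono) simp_all
    thus False using assms by simp
  qed
  show "k \<le> int n"
  proof (rule ccontr)
    assume "\<not> k \<le> int n"
    hence "int p * (int n + 1) \<le> int p * k" by (intro mult_left_mono) simp_all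
    thus False using assms by (simp add: algebra_simps)
  qed
qed

lemma qcong_if_diff_eq_prime_power_mult:
  assumes "prime p" "p_integral p \<rho>"
    and "x - y = of_nat p ^ (multiplicity p (fact N :: nat) + 1) * \<rho>"
  shows "qcong (1 / of_nat (fact N) * x) (1 / of_nat (fact N) * y) (int p)"
proof -
  define m where "m = multiplicity p (fact N :: nat)"
  obtain c where c: "fact N = p ^ m * c" "\<not> p dvd c"
    unfolding m_def by (metis multiplicity_decompose' fact_nonzero not_prime_unit assms(1))
  have "c > 0" using c(2) by (cases c) auto
  have diff: "x - y = of_nat p ^ (m + 1) * \<rho>" using assms(3) unfolding m_def .
  have "1 / of_nat (fact N) * x - 1 / of_nat (fact N) * y = 1 / of_nat (fact N) * (x - y)"
    by (simp add: right_diff_distrib)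
  also have "\<dots> = of_nat p * (\<rho> / of_int (int c))"
    using diff \<open>c > 0\<close> prime_gt_0_nat[OF assms(1)] unfolding c(1) by (simp add: field_simps)
  finally have eq: "1 / of_nat (fact N) * x - 1 / of_nat (fact N) * y =
    of_nat p * (\<rho> / of_int (int c))" .
  have "p_integral p (\<rho> / of_int (int c))"
    using c(2) by (intro p_integral_divide_of_int assms(1,2)) simp
  thus ?thesis unfolding qcong_def eq by (rule prime_dvd_numerator_of_p_integral[OF assms(1)])
qed

section \<open>The divided power algebra\<close>

locale divided_powers =
  fixes p :: nat and a :: nat
  assumes prime_p: "prime p"
begin

lemma p_gt_1: "p > 1" using prime_p prime_gt_1_nat by blast

lemma p_pos: "p > 0" using p_gt_1 by simp

definition int_polys :: "rat poly set" where
  "int_polys = {c. \<forall>i. p_integral p (coeff c i)}"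

lemma int_polys_mult: "c \<in> int_polys \<Longrightarrow> d \<in> int_polys \<Longrightarrow> c * d \<in> int_polys"
  unfolding int_polys_def
  by (auto simp: coeff_mult intro!: p_integral_sum[OF prime_p] p_integral_mult[OF prime_p])

lemma int_polys_const: "p_integral p x \<Longrightarrow> [:x:] \<in> int_polys"
  unfolding int_polys_def by (auto simp: coeff_pCons prime_p split: nat.splits)

lemma int_polys_monom: "p_integral p x \<Longrightarrow> monom x n \<in> int_polys"
  unfolding int_polys_def by (auto simp: coeff_monom prime_p)

lemma int_polys_of_int: "of_int k \<in> int_polys"
  by (metis int_polys_const of_int_poly p_integral_of_int prime_p)

lemma int_polys_of_nat: "of_nat k \<in> int_polys"
  using int_polys_of_int[of "int k"] by simp

lemma int_polys_power: "c \<in> int_polys \<Longrightarrow> c ^ n \<in> int_polys"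
  by (induction n) (auto intro: int_polys_mult int_polys_of_nat[of 1, simplified])

definition z :: "rat poly" where "z = monom 1 (p ^ Suc a) - 1"

definition u :: "rat poly" where "u = monom 1 (p ^ a) - 1"

definition dpow :: "nat \<Rightarrow> rat poly" where
  "dpow i = smult (1 / (of_nat (p ^ i) * fact i)) (z ^ i)"

lemma dpow_0: "dpow 0 = 1" by (simp add: dpow_def)

lemma dpow_1: "z = of_nat p * dpow 1"
  using p_pos by (simp add: dpow_def of_nat_poly)

lemma dpow_mult: "dpow i * dpow j = of_nat ((i + j) choose i) * dpow (i + j)"
proof -
  have "of_nat ((i + j) choose i) = (fact (i + j) / (fact i * fact j) :: rat)"
    using binomial_fact[of i "i + j"] by simp
  hence "(1 / (of_nat (p ^ i) * fact i)) * (1 / (of_nat (p ^ j) * fact j)) =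
      of_nat ((i + j) choose i) * (1 / (of_nat (p ^ (i + j)) * fact (i + j)) :: rat)"
    using p_pos by (simp add: field_simps power_add)
  thus ?thesis unfolding dpow_def by (simp add: power_add of_nat_poly mult_ac)
qed

lemma dpow_power: "\<exists>e::nat. dpow i ^ k = of_nat e * dpow (i * k)"
proof (induction k)
  case 0
  thus ?case by (intro exI[of _ 1]) (simp add: dpow_0)
next
  case (Suc k)
  then obtain e where e: "dpow i ^ k = of_nat e * dpow (i * k)" by blast
  have "dpow i ^ Suc k = of_nat e * (dpow (i * k) * dpow i)" using e by (simp add: mult_ac)
  also have "\<dots> = of_nat (e * ((i * k + i) choose (i * k))) * dpow (i * Suc k)"
    by (simp only: dpow_mult mult_Suc_right add.commute[of i] of_nat_mult mult.assoc)
  finally show ?case by blast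
qed

text \<open>The factor p comes from p dividing C(p i, i).\<close>

lemma dpow_power_prime:
  assumes "i \<ge> 1"
  shows "\<exists>e::nat. dpow i ^ p = of_nat p * (of_nat e * dpow (p * i))"
proof -
  obtain e where e: "dpow i ^ (p - 1) = of_nat e * dpow (i * (p - 1))" using dpow_power by blast
  have pe: "p = Suc (p - 1)" using p_pos by simp
  have "dpow i ^ p = of_nat e * (dpow (i * (p - 1)) * dpow i)"
    using e by (subst pe) (simp add: mult_ac)
  also have "\<dots> = of_nat e * (of_nat ((p * i) choose (i * (p - 1))) * dpow (p * i))"
    using dpow_mult[of "i * (p - 1)" i] pe by (metis add.commute mult.commute mult_Suc_right)
  also have "(p * i) choose (i * (p - 1)) = (p * i) choose i"
    using pe by (subst binomial_symmetric) (auto simp: algebra_simps)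
  also have "(p * i) choose i = p * ((p * i - 1) choose (i - 1))"
    using times_binomial_minus1_eq[of i "p * i"] assms p_pos by (simp add: mult_ac)
  finally have "dpow i ^ p = of_nat p * (of_nat (e * ((p * i - 1) choose (i - 1))) * dpow (p * i))"
    by (simp add: mult_ac)
  thus ?thesis by blast
qed

inductive_set dp_alg :: "rat poly set" where
  span: "c \<in> int_polys \<Longrightarrow> c * dpow i \<in> dp_alg"
| add: "x \<in> dp_alg \<Longrightarrow> y \<in> dp_alg \<Longrightarrow> x + y \<in> dp_alg"

lemma dp_alg_int_polys: "c \<in> int_polys \<Longrightarrow> c \<in> dp_alg"
  using dp_alg.span[of c 0] by (simp add: dpow_0)

lemma dp_alg_mult: "x \<in> dp_alg \<Longrightarrow> y \<in> dp_alg \<Longrightarrow> x * y \<in> dp_alg"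
proof (induction x rule: dp_alg.induct)
  case (span c i)
  from span(2) show ?case
  proof (induction y rule: dp_alg.induct)
    case (span d j)
    have "c * dpow i * (d * dpow j) = (c * d * of_nat ((i + j) choose i)) * dpow (i + j)"
      by (simp add: dpow_mult mult_ac)
    thus ?case using span.prems span.hyps \<open>c \<in> int_polys\<close>
      by (metis dp_alg.span int_polys_mult int_polys_of_nat)
  next
    case (add x y)
    thus ?case by (simp add: distrib_left dp_alg.add)
  qed
next
  case (add x y)
  thus ?case by (simp add: distrib_right dp_alg.add)
qed

lemma dp_alg_of_int: "of_int k \<in> dp_alg"
  using dp_alg_int_polys int_polys_of_int by blast

lemma dp_alg_of_nat: "of_nat k \<in> dp_alg"
  using dp_alg_of_int[of "int k"] by simp

lemma dp_alg_0: "0 \<in> dp_alg" and dp_alg_1: "1 \<in> dp_alg"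
  using dp_alg_of_nat[of 0] dp_alg_of_nat[of 1] by simp_all

lemma dp_alg_power: "x \<in> dp_alg \<Longrightarrow> x ^ n \<in> dp_alg"
  by (induction n) (auto intro: dp_alg_mult dp_alg_1)

lemma dp_alg_uminus: "x \<in> dp_alg \<Longrightarrow> - x \<in> dp_alg"
  using dp_alg_mult[OF dp_alg_of_int[of "-1"]] by fastforce

lemma dp_alg_diff: "x \<in> dp_alg \<Longrightarrow> y \<in> dp_alg \<Longrightarrow> x - y \<in> dp_alg"
  by (metis dp_alg.add dp_alg_uminus diff_conv_add_uminus)

lemma dp_alg_sum: "(\<And>i. i \<in> S \<Longrightarrow> f i \<in> dp_alg) \<Longrightarrow> sum f S \<in> dp_alg"
  by (induction S rule: infinite_finite_induct) (auto intro: dp_alg_0 dp_alg.add)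

lemma monom_in_dp_alg: "monom 1 k \<in> dp_alg"
  by (intro dp_alg_int_polys int_polys_monom) (simp add: prime_p)

inductive_set dp_ideal :: "rat poly set" where
  p_mult: "x \<in> dp_alg \<Longrightarrow> of_nat p * x \<in> dp_ideal"
| u_mult: "x \<in> dp_alg \<Longrightarrow> u * x \<in> dp_ideal"
| span: "c \<in> int_polys \<Longrightarrow> i \<ge> 1 \<Longrightarrow> c * dpow i \<in> dp_ideal"
| add: "x \<in> dp_ideal \<Longrightarrow> y \<in> dp_ideal \<Longrightarrow> x + y \<in> dp_ideal"

lemma dp_ideal_subset: "x \<in> dp_ideal \<Longrightarrow> x \<in> dp_alg"
proof (induction rule: dp_ideal.induct)
  case (u_mult x)
  have "u \<in> dp_alg" unfolding u_def by (intro dp_alg_diff monom_in_dp_alg dp_alg_1)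
  thus ?case using u_mult by (rule dp_alg_mult)
qed (auto intro: dp_alg_mult dp_alg_of_nat dp_alg.span dp_alg.add)

lemma dp_ideal_mult: "x \<in> dp_ideal \<Longrightarrow> y \<in> dp_alg \<Longrightarrow> y * x \<in> dp_ideal"
proof (induction x rule: dp_ideal.induct)
  case (p_mult x)
  thus ?case using dp_ideal.p_mult[OF dp_alg_mult[OF p_mult(2,1)]] by (simp add: mult_ac)
next
  case (u_mult x)
  thus ?case using dp_ideal.u_mult[OF dp_alg_mult[OF u_mult(2,1)]] by (simp add: mult_ac)
next
  case (span c i)
  from span(3) show ?case
  proof (induction y rule: dp_alg.induct)
    case (span d j)
    have "d * dpow j * (c * dpow i) = (c * d) * (dpow j * dpow i)" by (simp add: mult_ac)
    also have "\<dots> = (c * d * of_nat ((j + i) choose j)) * dpow (j + i)"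
      by (simp only: dpow_mult mult.assoc)
    also have "\<dots> \<in> dp_ideal"
      using span.hyps span.prems \<open>c \<in> int_polys\<close> \<open>i \<ge> 1\<close>
      by (intro dp_ideal.span int_polys_mult int_polys_of_nat) auto
    finally show ?case .
  next
    case (add x y)
    thus ?case by (simp add: distrib_right dp_ideal.add)
  qed
next
  case (add x y)
  thus ?case by (simp add: distrib_left dp_ideal.add)
qed

lemma dp_ideal_0: "0 \<in> dp_ideal"
  using dp_ideal.p_mult[OF dp_alg_0] by simp

lemma dp_ideal_sum: "(\<And>i. i \<in> S \<Longrightarrow> f i \<in> dp_ideal) \<Longrightarrow> sum f S \<in> dp_ideal"
  by (induction S rule: infinite_finite_induct) (auto intro: dp_ideal_0 dp_ideal.add)

lemma dp_ideal_uminus: "x \<in> dp_ideal \<Longrightarrow> - x \<in> dp_ideal"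
  using dp_ideal_mult[OF _ dp_alg_of_int[of "-1"]] by fastforce

lemma u_in_dp_ideal: "u \<in> dp_ideal"
  using dp_ideal.u_mult[OF dp_alg_1] by simp

lemma dp_alg_add_power_prime:
  assumes "x \<in> dp_alg" "y \<in> dp_alg"
  shows "\<exists>w\<in>dp_alg. (x + y) ^ p = x ^ p + y ^ p + of_nat p * w"
proof -
  have "(\<Sum>k\<in>{1..<p}. of_nat ((p choose k) div p) * x ^ k * y ^ (p - k)) \<in> dp_alg"
    using assms by (intro dp_alg_sum dp_alg_mult dp_alg_power dp_alg_of_nat)
  thus ?thesis using add_power_prime[OF prime_p, of x y] by blast
qed

lemma dp_ideal_add_power_prime:
  assumes "x \<in> dp_ideal" "y \<in> dp_alg"
  shows "\<exists>w\<in>dp_ideal. (x + y) ^ p = x ^ p + y ^ p + of_nat p * w"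
proof -
  have "(\<Sum>k\<in>{1..<p}. of_nat ((p choose k) div p) * x ^ k * y ^ (p - k)) \<in> dp_ideal"
  proof (rule dp_ideal_sum)
    fix k assume "k \<in> {1..<p}"
    hence "x ^ k = x ^ (k - 1) * x" by (metis Suc_diff_1 atLeastLessThan_iff
        less_le_trans power_Suc2 zero_less_one)
    hence "of_nat ((p choose k) div p) * x ^ k * y ^ (p - k) =
        (of_nat ((p choose k) div p) * x ^ (k - 1) * y ^ (p - k)) * x"
      by (simp only: mult_ac)
    also have "\<dots> \<in> dp_ideal"
      by (rule dp_ideal_mult[OF assms(1)])
        (intro dp_alg_mult dp_alg_power dp_alg_of_nat dp_ideal_subset[OF assms(1)] assms(2))
    finally show "of_nat ((p choose k) div p) * x ^ k * y ^ (p - k) \<in> dp_ideal" .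
  qed
  thus ?thesis using add_power_prime[OF prime_p, of x y] by blast
qed

lemma u_power_prime: "\<exists>w\<in>dp_ideal. u ^ p = of_nat p * w"
proof -
  obtain w where w: "w \<in> dp_ideal" "(u + 1) ^ p = u ^ p + 1 ^ p + of_nat p * w"
    using dp_ideal_add_power_prime[OF u_in_dp_ideal dp_alg_1] by blast
  have "(u + 1) ^ p = monom 1 (p ^ Suc a)" unfolding u_def by (simp add: monom_power mult.commute)
  hence "u ^ p = z - of_nat p * w" using w unfolding z_def by (simp add: algebra_simps)
  also have "\<dots> = of_nat p * (1 * dpow 1 + - w)" by (simp add: dpow_1 algebra_simps)
  finally have "u ^ p = of_nat p * (1 * dpow 1 + - w)" .
  moreover have "1 * dpow 1 + - w \<in> dp_ideal"
    using int_polys_of_nat[of 1] w(1) by (intro dp_ideal.add dp_ideal.span dp_ideal_uminus) auto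
  ultimately show ?thesis by blast
qed

lemma dp_ideal_power_prime: "x \<in> dp_ideal \<Longrightarrow> \<exists>w\<in>dp_ideal. x ^ p = of_nat p * w"
proof (induction rule: dp_ideal.induct)
  case (p_mult x)
  have pp: "p = Suc (Suc (p - 2))" using p_gt_1 by simp
  have "(of_nat p * x) ^ p = of_nat p * (of_nat p * (of_nat (p ^ (p - 2)) * x ^ p))"
    by (subst (1 2) pp) (simp add: power_mult_distrib mult_ac)
  moreover have "of_nat p * (of_nat (p ^ (p - 2)) * x ^ p) \<in> dp_ideal"
    using p_mult by (intro dp_ideal.p_mult dp_alg_mult dp_alg_of_nat dp_alg_power)
  ultimately show ?case by blast
next
  case (u_mult x)
  obtain w where w: "w \<in> dp_ideal" "u ^ p = of_nat p * w" using u_power_prime by blast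
  have "(u * x) ^ p = of_nat p * (x ^ p * w)" using w by (simp add: power_mult_distrib mult_ac)
  moreover have "x ^ p * w \<in> dp_ideal" using u_mult w by (intro dp_ideal_mult dp_alg_power)
  ultimately show ?case by blast
next
  case (span c i)
  obtain e where e: "dpow i ^ p = of_nat p * (of_nat e * dpow (p * i))"
    using dpow_power_prime[OF span(2)] by blast
  have "(c * dpow i) ^ p = of_nat p * ((c ^ p * of_nat e) * dpow (p * i))"
    using e by (simp add: power_mult_distrib mult_ac)
  moreover have "(c ^ p * of_nat e) * dpow (p * i) \<in> dp_ideal"
    using span p_pos by (intro dp_ideal.span int_polys_mult int_polys_power int_polys_of_nat) auto
  ultimately show ?case by blast
next
  case (add x y)
  obtain w1 where w1: "w1 \<in> dp_ideal" "x ^ p = of_nat p * w1" using add by blast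
  obtain w2 where w2: "w2 \<in> dp_ideal" "y ^ p = of_nat p * w2" using add by blast
  obtain w3 where w3: "w3 \<in> dp_ideal" "(x + y) ^ p = x ^ p + y ^ p + of_nat p * w3"
    using dp_ideal_add_power_prime[OF add(1) dp_ideal_subset[OF add(2)]] by blast
  have "(x + y) ^ p = of_nat p * (w1 + w2 + w3)" using w1 w2 w3 by (simp add: algebra_simps)
  moreover have "w1 + w2 + w3 \<in> dp_ideal" using w1 w2 w3 by (intro dp_ideal.add)
  ultimately show ?case by blast
qed

lemma dp_ideal_power:
  "w \<in> dp_ideal \<Longrightarrow> \<exists>b\<in>dp_alg. w ^ N = of_nat p ^ multiplicity p (fact N :: nat) * b"
proof (induction N arbitrary: w rule: less_induct)
  case (less N)
  show ?case
  proof (cases "N = 0")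
    case True
    thus ?thesis by (intro bexI[of _ 1]) (auto simp: dp_alg_1)
  next
    case False
    hence lt: "N div p < N" using p_gt_1 by simp
    obtain w' where w': "w' \<in> dp_ideal" "w ^ p = of_nat p * w'"
      using dp_ideal_power_prime[OF less.prems] by blast
    obtain b where b: "b \<in> dp_alg"
      "w' ^ (N div p) = of_nat p ^ multiplicity p (fact (N div p) :: nat) * b"
      using less.IH[OF lt w'(1)] by blast
    have "w ^ N = (w ^ p) ^ (N div p) * w ^ (N mod p)"
      by (metis mult_div_mod_eq power_add power_mult)
    also have "\<dots> = of_nat p ^ (N div p) * w' ^ (N div p) * w ^ (N mod p)"
      using w' by (simp add: power_mult_distrib)
    also have "\<dots> = of_nat p ^ multiplicity p (fact N :: nat) * (b * w ^ (N mod p))"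
      using b by (simp add: multiplicity_fact_rec[OF prime_p, of N] power_add mult_ac)
    finally show ?thesis
      using b less.prems by (intro bexI[of _ "b * w ^ (N mod p)"])
        (auto intro: dp_alg_mult dp_alg_power dp_ideal_subset)
  qed
qed

lemma dp_alg_power_add_p_mult:
  assumes "x \<in> dp_alg" "b \<in> dp_alg"
  shows "\<exists>G\<in>dp_alg. (x + of_nat p * b) ^ k = x ^ k + of_nat p * G"
proof (induction k)
  case 0
  thus ?case using dp_alg_0 by (intro bexI[of _ 0]) auto
next
  case (Suc k)
  then obtain G where G: "G \<in> dp_alg" "(x + of_nat p * b) ^ k = x ^ k + of_nat p * G" by blast
  have "(x + of_nat p * b) ^ Suc k = (x ^ k + of_nat p * G) * (x + of_nat p * b)"
    using G by (simp add: power_Suc2)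
  also have "\<dots> = x ^ Suc k + of_nat p * (G * x + x ^ k * b + of_nat p * G * b)"
    by (simp add: algebra_simps power_Suc2)
  finally show ?case using G assms
    by (intro bexI[of _ "G * x + x ^ k * b + of_nat p * G * b"])
      (auto intro!: dp_alg.add dp_alg_mult dp_alg_power dp_alg_of_nat)
qed

lemma dp_alg_uminus_power_prime:
  assumes "V \<in> dp_alg"
  shows "\<exists>G\<in>dp_alg. (- V) ^ p = - (V ^ p) + of_nat p * G"
proof (cases "p = 2")
  case True
  hence "(- V) ^ p = - (V ^ p) + of_nat p * V ^ p" by simp
  thus ?thesis using dp_alg_power[OF assms] by blast
next
  case False
  hence "odd p" using prime_p prime_odd_nat p_gt_1 by (metis le_neq_implies_less prime_ge_2_nat)
  hence "(- V) ^ p = - (V ^ p)" by (simp add: power_minus_odd)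
  thus ?thesis using dp_alg_0 by (intro bexI[of _ 0]) auto
qed

lemma dp_alg_one_minus_power_prime_power:
  assumes "W \<in> dp_alg"
  shows "\<exists>G\<in>dp_alg. (1 - W) ^ (p ^ e) = 1 - W ^ (p ^ e) + of_nat p * G"
proof (induction e)
  case 0
  thus ?case using dp_alg_0 by (intro bexI[of _ 0]) auto
next
  case (Suc e)
  then obtain G where G: "G \<in> dp_alg" "(1 - W) ^ (p ^ e) = 1 - W ^ (p ^ e) + of_nat p * G"
    by blast
  define V where "V = W ^ (p ^ e)"
  have V: "V \<in> dp_alg" unfolding V_def using assms by (rule dp_alg_power)
  obtain G1 where G1: "G1 \<in> dp_alg" "(1 - V + of_nat p * G) ^ p = (1 - V) ^ p + of_nat p * G1"
    using dp_alg_power_add_p_mult[OF dp_alg_diff[OF dp_alg_1 V] G(1)] by blast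
  obtain G2 where G2: "G2 \<in> dp_alg" "(1 + (- V)) ^ p = 1 ^ p + (- V) ^ p + of_nat p * G2"
    using dp_alg_add_power_prime[OF dp_alg_1 dp_alg_uminus[OF V]] by blast
  obtain G3 where G3: "G3 \<in> dp_alg" "(- V) ^ p = - (V ^ p) + of_nat p * G3"
    using dp_alg_uminus_power_prime[OF V] by blast
  have "(1 - W) ^ (p ^ Suc e) = ((1 - W) ^ (p ^ e)) ^ p"
    by (subst power_Suc2) (simp only: power_mult)
  also have "\<dots> = (1 - V + of_nat p * G) ^ p" using G V_def by simp
  also have "\<dots> = 1 - V ^ p + of_nat p * (G1 + G2 + G3)"
    using G1 G2 G3 by (simp add: algebra_simps)
  also have "V ^ p = W ^ (p ^ Suc e)" unfolding V_def by (subst power_Suc2) (simp only: power_mult)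
  finally show ?case using G1 G2 G3 by (intro bexI[of _ "G1 + G2 + G3"]) (auto intro: dp_alg.add)
qed

lemma dp_ideal_power_add_p_mult:
  assumes y: "y \<in> dp_ideal" and d: "d \<in> dp_alg"
  shows "\<exists>b\<in>dp_alg. (y + of_nat p * d) ^ N =
    y ^ N + of_nat p ^ (multiplicity p (fact N :: nat) + 1) * b"
proof -
  define v where "v m = multiplicity p (fact m :: nat)" for m
  obtain B where B: "\<And>j. B j \<in> dp_alg" "\<And>j. y ^ j = of_nat p ^ v j * B j"
    using dp_ideal_power[OF y] unfolding v_def by metis
  define e where "e j = (N choose j) * p ^ j * p ^ v (N - j) div p ^ (v N + 1)" for j
  have binomial_term: "of_nat (N choose j) * (of_nat p * d) ^ j * y ^ (N - j) =
      of_nat p ^ (v N + 1) * (of_nat (e j) * (d ^ j * B (N - j)))" if "j \<in> {1..N}" for j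
  proof -
    have "of_nat (N choose j) * (of_nat p * d) ^ j * y ^ (N - j) =
        of_nat ((N choose j) * p ^ j * p ^ v (N - j)) * (d ^ j * B (N - j))"
      using B(2)[of "N - j"] by (simp add: power_mult_distrib mult_ac)
    also have "(N choose j) * p ^ j * p ^ v (N - j) = p ^ (v N + 1) * e j"
      using prime_power_dvd_choose_mult[OF prime_p, of j N] that unfolding e_def v_def by simp
    finally show ?thesis by (simp add: mult_ac)
  qed
  have "(y + of_nat p * d) ^ N = (\<Sum>j\<le>N. of_nat (N choose j) * (of_nat p * d) ^ j * y ^ (N - j))"
    using binomial_ring[of "of_nat p * d" y N] by (simp add: add.commute)
  also have "{..N} = insert 0 {1..N}" by auto
  also have "(\<Sum>j\<in>insert 0 {1..N}. of_nat (N choose j) * (of_nat p * d) ^ j * y ^ (N - j)) =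
      y ^ N + of_nat p ^ (v N + 1) * (\<Sum>j\<in>{1..N}. of_nat (e j) * (d ^ j * B (N - j)))"
    by (simp add: sum_distrib_left binomial_term)
  finally show ?thesis using B(1) d unfolding v_def
    by (intro bexI[of _ "\<Sum>j\<in>{1..N}. of_nat (e j) * (d ^ j * B (N - j))"])
      (auto intro!: dp_alg_sum dp_alg_mult dp_alg_power dp_alg_of_nat)
qed

lemma one_minus_monom_power_in_dp_ideal:
  assumes "a \<ge> 1"
  shows "(1 - monom 1 p) ^ (p ^ (a - 1)) \<in> dp_ideal"
proof -
  obtain G where G: "G \<in> dp_alg"
    "(1 - monom 1 p) ^ (p ^ (a - 1)) = 1 - (monom 1 p) ^ (p ^ (a - 1)) + of_nat p * G"
    using dp_alg_one_minus_power_prime_power[OF monom_in_dp_alg] by blast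
  have "(monom 1 p :: rat poly) ^ (p ^ (a - 1)) = monom 1 (p * p ^ (a - 1))"
    by (simp add: monom_power)
  also have "p * p ^ (a - 1) = p ^ a" using assms by (metis Suc_diff_le diff_Suc_1 power_Suc)
  finally have "(1 - monom 1 p) ^ (p ^ (a - 1)) = - u + of_nat p * G"
    using G(2) unfolding u_def by simp
  also have "\<dots> \<in> dp_ideal"
    using dp_ideal_uminus[OF u_in_dp_ideal] dp_ideal.p_mult[OF G(1)] by (rule dp_ideal.add)
  finally show ?thesis .
qed

lemma one_minus_X_power_mult_prime:
  "\<exists>G\<in>dp_alg. (1 - monom 1 1) ^ (p * m) = (1 - monom 1 p) ^ m + of_nat p * G"
proof -
  have "1 - monom 1 p \<in> dp_alg" by (intro dp_alg_diff dp_alg_1 monom_in_dp_alg)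
  moreover obtain H where "H \<in> dp_alg" "(1 - monom 1 1) ^ p = 1 - monom 1 p + of_nat p * H"
    using dp_alg_one_minus_power_prime_power[OF monom_in_dp_alg, of 1 1] by (auto simp: monom_power)
  ultimately show ?thesis using dp_alg_power_add_p_mult[of "1 - monom 1 p" H m]
    by (simp add: power_mult)
qed

lemma one_minus_X_power_decomp:
  assumes "a \<ge> 1"
  shows "\<exists>B\<in>dp_alg. (1 - monom 1 1) ^ (p * n + s) =
    (1 - monom 1 1) ^ s * (1 - monom 1 p) ^ n +
    of_nat p ^ (multiplicity p (fact (n div p ^ (a - 1)) :: nat) + 1) * B"
proof -
  define X :: "rat poly" where "X = monom 1 1"
  define Y :: "rat poly" where "Y = 1 - monom 1 p"
  define P :: "rat poly" where "P = of_nat p"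
  define q where "q = p ^ (a - 1)"
  define N where "N = n div q"
  define n0 where "n0 = n mod q"
  define v where "v = multiplicity p (fact N :: nat)"
  have n_eq: "n = n0 + q * N" unfolding N_def n0_def by simp
  obtain G where G: "G \<in> dp_alg" "(1 - X) ^ (p * n0) = Y ^ n0 + P * G"
    using one_minus_X_power_mult_prime unfolding X_def Y_def P_def by blast
  obtain d where d: "d \<in> dp_alg" "(1 - X) ^ (p * q) = Y ^ q + P * d"
    using one_minus_X_power_mult_prime unfolding X_def Y_def P_def by blast
  have y: "Y ^ q \<in> dp_ideal"
    using one_minus_monom_power_in_dp_ideal[OF assms] unfolding Y_def q_def .
  obtain b where b: "b \<in> dp_alg" "(Y ^ q + P * d) ^ N = (Y ^ q) ^ N + P ^ (v + 1) * b"
    using dp_ideal_power_add_p_mult[OF y d(1), of N] unfolding P_def v_def by blast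
  obtain b' where b': "b' \<in> dp_alg" "(Y ^ q) ^ N = P ^ v * b'"
    using dp_ideal_power[OF y, of N] unfolding P_def v_def by blast
  have "(1 - X) ^ (p * n + s) = (1 - X) ^ s * (1 - X) ^ (p * n0) * ((1 - X) ^ (p * q)) ^ N"
    unfolding n_eq by (simp add: power_add algebra_simps flip: power_mult)
  also have "\<dots> = (1 - X) ^ s * (Y ^ n0 + P * G) * ((Y ^ q) ^ N + P ^ (v + 1) * b)"
    unfolding G(2) d(2) b(2) ..
  also have "\<dots> = (1 - X) ^ s * (Y ^ n0 * (Y ^ q) ^ N) +
      P ^ (v + 1) * ((1 - X) ^ s * (Y ^ n0 * b + G * b' + P * G * b))"
    using b'(2) by (simp add: algebra_simps)
  also have "Y ^ n0 * (Y ^ q) ^ N = Y ^ n" unfolding n_eq by (simp add: power_add power_mult)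
  finally have "(1 - X) ^ (p * n + s) =
      (1 - X) ^ s * Y ^ n + P ^ (v + 1) * ((1 - X) ^ s * (Y ^ n0 * b + G * b' + P * G * b))" .
  moreover have "(1 - X) ^ s * (Y ^ n0 * b + G * b' + P * G * b) \<in> dp_alg"
    using b b' G unfolding X_def Y_def P_def
    by (intro dp_alg_mult dp_alg.add dp_alg_power dp_alg_diff dp_alg_1 monom_in_dp_alg dp_alg_of_nat)
  ultimately show ?thesis unfolding X_def Y_def P_def v_def N_def q_def by blast
qed

end

section \<open>The class functional\<close>

context divided_powers
begin

text \<open>For r = p r' + t, the class K \<equiv> r (mod p^(a+1)) of exponents K = p k + t corresponds to
  the class k \<equiv> r' (mod p^a), and (K - r) / p^a = (k - r') / p^(a-1).\<close>

definition class_weight :: "int \<Rightarrow> nat \<Rightarrow> nat \<Rightarrow> rat" where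
  "class_weight r l K = (if [int K = r] (mod int (p ^ Suc a))
    then (of_int (int K - r) / of_nat (p ^ a)) ^ l else 0)"

definition class_functional :: "int \<Rightarrow> nat \<Rightarrow> rat poly \<Rightarrow> rat" where
  "class_functional r l P = (\<Sum>K\<le>degree P. coeff P K * class_weight r l K)"

lemma class_functional_eq_sum_lessThan:
  "degree P < B \<Longrightarrow> class_functional r l P = (\<Sum>K<B. coeff P K * class_weight r l K)"
  unfolding class_functional_def by (rule sum.mono_neutral_left) (auto simp: coeff_eq_0)

lemma class_functional_add:
  "class_functional r l (P + P') = class_functional r l P + class_functional r l P'"
proof -
  define B where "B = Suc (max (degree P) (degree P'))"
  have "degree (P + P') < B" unfolding B_def using degree_add_le_max[of P P'] by simp
  moreover have "degree P < B" "degree P' < B" unfolding B_def by auto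
  ultimately show ?thesis
    by (simp add: class_functional_eq_sum_lessThan[of _ B] sum.distrib algebra_simps)
qed

lemma class_functional_smult: "class_functional r l (smult c P) = c * class_functional r l P"
proof -
  have "degree (smult c P) < Suc (degree P)" using degree_smult_le[of c P] by simp
  hence "class_functional r l (smult c P) =
      (\<Sum>K<Suc (degree P). coeff (smult c P) K * class_weight r l K)"
    by (rule class_functional_eq_sum_lessThan)
  also have "\<dots> = c * (\<Sum>K<Suc (degree P). coeff P K * class_weight r l K)"
    by (simp only: coeff_smult sum_distrib_left mult.assoc)
  also have "\<dots> = c * class_functional r l P"
    by (subst class_functional_eq_sum_lessThan[of P "Suc (degree P)"]) simp_all
  finally show ?thesis .
qed

lemma class_functional_0: "class_functional r l 0 = 0"
  by (simp add: class_functional_def)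

lemma class_functional_sum:
  "class_functional r l (\<Sum>i\<in>S. f i) = (\<Sum>i\<in>S. class_functional r l (f i))"
  by (induction S rule: infinite_finite_induct)
    (simp_all add: class_functional_0 class_functional_add)

lemma class_functional_monom: "class_functional r l (monom c K) = c * class_weight r l K"
proof -
  have "degree (monom c K) < Suc K" by (simp add: le_less_trans[OF degree_monom_le])
  hence "class_functional r l (monom c K) = (\<Sum>K'<Suc K. coeff (monom c K) K' * class_weight r l K')"
    by (rule class_functional_eq_sum_lessThan)
  also have "\<dots> = c * class_weight r l K" by (simp add: coeff_monom sum.If_cases)
  finally show ?thesis .
qed

lemma class_weight_shift:
  "class_weight r l (d + p ^ Suc a * h) = (if [int d = r] (mod int (p ^ Suc a)) then
      of_nat p ^ l * (of_int ((int d - r) div int (p ^ Suc a)) + of_nat h) ^ l else 0)"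
proof -
  have c: "[int (d + p ^ Suc a * h) = r] (mod int (p ^ Suc a)) \<longleftrightarrow> [int d = r] (mod int (p ^ Suc a))"
    by (simp add: cong_def)
  show ?thesis
  proof (cases "[int d = r] (mod int (p ^ Suc a))")
    case True
    then obtain c0 where c0: "int d - r = int (p ^ Suc a) * c0"
      by (metis cong_iff_dvd_diff dvd_def)
    hence "(int d - r) div int (p ^ Suc a) = c0" using p_pos by simp
    moreover have "int (d + p ^ Suc a * h) - r = int (p ^ Suc a) * (c0 + int h)"
      using c0 by (simp add: algebra_simps)
    hence "(of_int (int (d + p ^ Suc a * h) - r) / of_nat (p ^ a) :: rat) =
        of_nat p * (of_int c0 + of_nat h)"
      using p_pos by (simp add: field_simps)
    ultimately show ?thesis unfolding class_weight_def using True c by (simp add: power_mult_distrib)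
  next
    case False
    thus ?thesis unfolding class_weight_def using c by simp
  qed
qed

lemma class_functional_monom_mult_dpow:
  "class_functional r l (monom 1 d * dpow i) = (if [int d = r] (mod int (p ^ Suc a)) then
      of_nat p ^ l * of_int (finite_diff_pow i l ((int d - r) div int (p ^ Suc a))) /
        (of_nat p ^ i * fact i) else 0)"
proof -
  have "monom 1 d * dpow i = smult (1 / (of_nat (p ^ i) * fact i))
      (\<Sum>h\<le>i. monom (of_nat (i choose h) * (-1) ^ (i - h)) (d + p ^ Suc a * h))"
    unfolding dpow_def z_def monom_minus_one_power by (simp add: sum_distrib_left mult_monom)
  hence "class_functional r l (monom 1 d * dpow i) = (1 / (of_nat (p ^ i) * fact i)) *
      (\<Sum>h\<le>i. of_nat (i choose h) * (-1) ^ (i - h) * class_weight r l (d + p ^ Suc a * h))"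
    by (simp add: class_functional_smult class_functional_sum class_functional_monom)
  thus ?thesis
    unfolding class_weight_shift finite_diff_pow_def
    by (auto simp: sum_distrib_left sum_divide_distrib field_simps)
qed

lemma p_integral_class_functional_monom_mult_dpow:
  "p_integral p (class_functional r l (monom 1 d * dpow i))"
proof (cases "i \<le> l")
  case True
  obtain k where k: "finite_diff_pow i l ((int d - r) div int (p ^ Suc a)) = fact i * k"
    using fact_dvd_finite_diff_pow by (meson dvdE)
  have "(of_nat p ^ l * of_int (finite_diff_pow i l ((int d - r) div int (p ^ Suc a))) /
      (of_nat p ^ i * fact i) :: rat) = of_int (int (p ^ (l - i)) * k)"
    using True p_pos unfolding k by (simp add: field_simps power_add[symmetric])
  thus ?thesis unfolding class_functional_monom_mult_dpow
    using prime_p by (simp add: p_integral_mult p_integral_power)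
next
  case False
  thus ?thesis unfolding class_functional_monom_mult_dpow
    using prime_p by (simp add: finite_diff_pow_eq_0)
qed

lemma p_integral_class_functional: "P \<in> dp_alg \<Longrightarrow> p_integral p (class_functional r l P)"
proof (induction rule: dp_alg.induct)
  case (span c i)
  have "c * dpow i = (\<Sum>d\<le>degree c. smult (coeff c d) (monom 1 d * dpow i))"
    by (subst poly_as_sum_of_monoms[symmetric])
      (simp add: sum_distrib_right smult_monom flip: mult_smult_left)
  hence "class_functional r l (c * dpow i) =
      (\<Sum>d\<le>degree c. coeff c d * class_functional r l (monom 1 d * dpow i))"
    by (simp add: class_functional_sum class_functional_smult)
  moreover have "p_integral p (\<Sum>d\<le>degree c. coeff c d * class_functional r l (monom 1 d * dpow i))"
    using span unfolding int_polys_def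
    by (intro p_integral_sum[OF prime_p] p_integral_mult[OF prime_p]
        p_integral_class_functional_monom_mult_dpow) auto
  ultimately show ?case by simp
next
  case (add x y)
  thus ?case by (simp add: class_functional_add p_integral_add[OF prime_p])
qed

lemma class_weight_eq_0:
  assumes "t < p" "K mod p \<noteq> t"
  shows "class_weight (int p * r + int t) l K = 0"
proof (rule ccontr)
  assume "class_weight (int p * r + int t) l K \<noteq> 0"
  hence "[int K = int p * r + int t] (mod int (p ^ Suc a))"
    unfolding class_weight_def by (auto split: if_splits)
  hence "[int K = int p * r + int t] (mod int p)" by (rule cong_dvd_modulus) simp
  hence "int (K mod p) = int t" using assms(1) by (simp add: cong_def zmod_int)
  thus False using assms(2) by simp
qed

lemma class_weight_mult_add:
  assumes "a \<ge> 1"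
  shows "class_weight (int p * r + int t) l (t + p * k) =
    (if [int k = r] (mod int (p ^ a)) then (of_int (int k - r) / of_nat (p ^ (a - 1))) ^ l else 0)"
proof -
  have diff: "int (t + p * k) - (int p * r + int t) = int p * (int k - r)"
    by (simp add: algebra_simps)
  have "[int (t + p * k) = int p * r + int t] (mod int (p ^ Suc a)) \<longleftrightarrow> [int k = r] (mod int (p ^ a))"
    unfolding cong_iff_dvd_diff diff using p_pos by simp
  moreover have "(of_nat (p ^ a) :: rat) = of_nat p * of_nat (p ^ (a - 1))"
    using assms by (metis Suc_diff_le diff_Suc_1 of_nat_mult power_Suc)
  hence "(of_int (int (t + p * k) - (int p * r + int t)) / of_nat (p ^ a) :: rat) =
      of_int (int k - r) / of_nat (p ^ (a - 1))"
    unfolding diff using p_pos by simp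
  ultimately show ?thesis unfolding class_weight_def by simp
qed

lemma sum_class_weight_eq_class_sum:
  assumes "a \<ge> 1" "\<And>k. g k \<noteq> 0 \<Longrightarrow> 0 \<le> k \<and> k \<le> int n"
  shows "(\<Sum>k\<le>n. g (int k) * class_weight (int p * r + int t) l (t + p * k)) =
    class_sum (\<lambda>k. g k * (of_int (k - r) / of_int (int p ^ (a - 1))) ^ l) r (int p ^ a)"
proof -
  have "class_sum (\<lambda>k. g k * (of_int (k - r) / of_int (int p ^ (a - 1))) ^ l) r (int p ^ a) =
      (\<Sum>k\<le>n. if [int k = r] (mod int p ^ a)
        then g (int k) * (of_int (int k - r) / of_int (int p ^ (a - 1))) ^ l else 0)"
    by (rule class_sum_eq_sum_atMost) (use assms(2) in auto)
  also have "\<dots> = (\<Sum>k\<le>n. g (int k) * class_weight (int p * r + int t) l (t + p * k))"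
    by (rule sum.cong[OF refl]) (simp add: class_weight_mult_add[OF assms(1)])
  finally show ?thesis ..
qed

lemma class_functional_one_minus_X_power:
  assumes "a \<ge> 1" "t < p" "s < p"
  shows "class_functional (int p * r + int t) l ((1 - monom 1 1) ^ (p * n + s)) =
    (-1) ^ t * class_sum (\<lambda>k. of_int (ibinom (int p * int n + int s) (int p * k + int t)) *
      (-1) powi (int p * k) * (of_int (k - r) / of_int (int p ^ (a - 1))) ^ l) r (int p ^ a)"
proof -
  define w where "w = class_weight (int p * r + int t) l"
  define c where "c K = of_nat ((p * n + s) choose K) * (-1) ^ K * w K" for K
  define g :: "int \<Rightarrow> rat" where "g k = of_int (ibinom (int p * int n + int s) (int p * k + int t)) *
    (-1) powi (int p * k)" for k
  have "class_functional (int p * r + int t) l ((1 - monom 1 1) ^ (p * n + s)) =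
      (\<Sum>K\<le>p * n + s. c K)"
    unfolding one_minus_monom_power c_def w_def
    by (simp add: class_functional_sum class_functional_monom)
  also have "\<dots> = (\<Sum>K<Suc n * p. c K)"
    unfolding c_def by (rule sum.mono_neutral_cong_left) (use assms(3) in \<open>auto simp: algebra_simps\<close>)
  also have "\<dots> = (\<Sum>k\<le>n. c (k * p + t))"
    by (rule sum_lessThan_mult_eq_sum_residue[OF assms(2)])
      (simp add: c_def w_def class_weight_eq_0 assms(2))
  also have "\<dots> = (-1) ^ t * (\<Sum>k\<le>n. g (int k) * w (t + p * k))"
    unfolding sum_distrib_left
  proof (rule sum.cong[OF refl])
    fix k
    have "int p * int n + int s = int (p * n + s)" "int p * int k = int (p * k)"
      "int (p * k) + int t = int (t + p * k)"
      by simp_all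
    hence "g (int k) = of_nat ((p * n + s) choose (t + p * k)) * (-1) ^ (p * k)"
      unfolding g_def by (simp only: ibinom_of_nat power_int_of_nat of_int_of_nat_eq)
    thus "c (k * p + t) = (-1) ^ t * (g (int k) * w (t + p * k))"
      unfolding c_def by (simp add: add.commute mult.commute power_add)
  qed
  also have "(\<Sum>k\<le>n. g (int k) * w (t + p * k)) =
      class_sum (\<lambda>k. g k * (of_int (k - r) / of_int (int p ^ (a - 1))) ^ l) r (int p ^ a)"
    unfolding w_def
  proof (rule sum_class_weight_eq_class_sum[OF assms(1)])
    fix k assume "g k \<noteq> 0"
    hence "0 \<le> int p * k + int t" "int p * k + int t \<le> int p * int n + int s"
      unfolding g_def ibinom_def by (auto split: if_splits)
    thus "0 \<le> k \<and> k \<le> int n" using bounds_of_mult_add_bounds assms(2,3) by blast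
  qed
  finally show ?thesis unfolding g_def .
qed

lemma class_functional_one_minus_X_power_mult:
  assumes "a \<ge> 1" "t < p" "s < p"
  shows "class_functional (int p * r + int t) l ((1 - monom 1 1) ^ s * (1 - monom 1 p) ^ n) =
    (-1) ^ t * class_sum (\<lambda>k. of_int (ibinom (int n) k) * of_int (ibinom (int s) (int t)) *
      (-1) powi k * (of_int (k - r) / of_int (int p ^ (a - 1))) ^ l) r (int p ^ a)"
proof -
  define w where "w = class_weight (int p * r + int t) l"
  define F where "F \<sigma> = (\<Sum>k\<le>n. of_nat (s choose \<sigma>) * (-1) ^ \<sigma> * (of_nat (n choose k) * (-1) ^ k) *
    w (\<sigma> + p * k))" for \<sigma>
  define g :: "int \<Rightarrow> rat" where "g k = of_int (ibinom (int n) k) * of_int (ibinom (int s) (int t)) *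
    (-1) powi k" for k
  have "(1 - monom 1 1) ^ s * (1 - monom 1 p) ^ n = (\<Sum>\<sigma>\<le>s. \<Sum>k\<le>n.
      monom (of_nat (s choose \<sigma>) * (-1) ^ \<sigma> * (of_nat (n choose k) * (-1) ^ k) :: rat) (\<sigma> + p * k))"
    unfolding one_minus_monom_power sum_product by (simp only: mult_monom mult_1)
  hence "class_functional (int p * r + int t) l ((1 - monom 1 1) ^ s * (1 - monom 1 p) ^ n) =
      (\<Sum>\<sigma>\<le>s. F \<sigma>)"
    unfolding F_def w_def by (simp only: class_functional_sum class_functional_monom)
  also have "\<dots> = (\<Sum>\<sigma>\<le>s. if \<sigma> = t then F t else 0)"
  proof (rule sum.cong[OF refl])
    fix \<sigma> assume "\<sigma> \<in> {..s}"
    hence "(\<sigma> + p * k) mod p \<noteq> t" if "\<sigma> \<noteq> t" for k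
      using that assms(3) by simp
    hence "\<sigma> \<noteq> t \<Longrightarrow> F \<sigma> = 0"
      unfolding F_def w_def using class_weight_eq_0[OF assms(2)] by simp
    thus "F \<sigma> = (if \<sigma> = t then F t else 0)" by auto
  qed
  also have "\<dots> = (-1) ^ t * (\<Sum>k\<le>n. g (int k) * w (t + p * k))"
  proof (cases "t \<le> s")
    case True
    have "g (int k) = of_nat (n choose k) * of_nat (s choose t) * (-1) ^ k" for k
      unfolding g_def by (simp only: ibinom_of_nat power_int_of_nat of_int_of_nat_eq)
    thus ?thesis using True unfolding F_def by (simp add: sum_distrib_left mult_ac)
  next
    case False
    thus ?thesis unfolding g_def ibinom_of_nat by (simp add: binomial_eq_0)
  qed
  also have "(\<Sum>k\<le>n. g (int k) * w (t + p * k)) =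
      class_sum (\<lambda>k. g k * (of_int (k - r) / of_int (int p ^ (a - 1))) ^ l) r (int p ^ a)"
    unfolding w_def
    by (rule sum_class_weight_eq_class_sum[OF assms(1)]) (auto simp: g_def ibinom_def split: if_splits)
  finally show ?thesis unfolding g_def .
qed

lemma class_sums_diff:
  assumes "a \<ge> 1" "t < p" "s < p"
  shows "\<exists>\<rho>. p_integral p \<rho> \<and>
    class_sum (\<lambda>k. of_int (ibinom (int p * int n + int s) (int p * k + int t)) * (-1) powi (int p * k)
                    * (of_int (k - r) / of_int (int p ^ (a - 1))) ^ l) r (int p ^ a) -
    class_sum (\<lambda>k. of_int (ibinom (int n) k) * of_int (ibinom (int s) (int t)) * (-1) powi k
                    * (of_int (k - r) / of_int (int p ^ (a - 1))) ^ l) r (int p ^ a)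
    = of_nat p ^ (multiplicity p (fact (n div p ^ (a - 1)) :: nat) + 1) * \<rho>"
    (is "\<exists>\<rho>. _ \<and> ?lhs - ?rhs = ?e * \<rho>")
proof -
  obtain B where B: "B \<in> dp_alg" "(1 - monom 1 1) ^ (p * n + s) =
      (1 - monom 1 1) ^ s * (1 - monom 1 p) ^ n +
      of_nat p ^ (multiplicity p (fact (n div p ^ (a - 1)) :: nat) + 1) * B"
    using one_minus_X_power_decomp[OF assms(1)] by blast
  define L where "L = class_functional (int p * r + int t) l"
  have "L ((1 - monom 1 1) ^ (p * n + s)) = L ((1 - monom 1 1) ^ s * (1 - monom 1 p) ^ n) + ?e * L B"
    unfolding B(2) L_def
    by (simp add: class_functional_add class_functional_smult of_nat_mult_conv_smult
        flip: of_nat_power)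
  hence "(-1) ^ t * ?lhs = (-1) ^ t * ?rhs + ?e * L B"
    unfolding L_def class_functional_one_minus_X_power[OF assms]
      class_functional_one_minus_X_power_mult[OF assms] .
  hence "?lhs - ?rhs = ?e * ((-1) ^ t * L B)"
    by (cases "even t") (auto simp: algebra_simps)
  moreover have "p_integral p ((-1) ^ t * L B)"
    using prime_p p_integral_class_functional[OF B(1)] unfolding L_def
    by (intro p_integral_mult p_integral_power) (simp_all add: p_integral_of_int[of p "-1", simplified])
  ultimately show ?thesis by blast
qed

end

theorem theorem1p6:
  fixes p l n :: nat and r s t \<alpha> :: int
  assumes "prime p"
    and "0 \<le> s" "s < int p" "0 \<le> t" "t < int p"
    and "\<alpha> \<ge> 2"
  shows "qcong
    ((1 / of_nat (fact (n div p ^ (nat \<alpha> - 1)))) *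
      class_sum (\<lambda>k. of_int (ibinom (int p * int n + s) (int p * k + t)) * (-1) powi (int p * k)
                    * (of_int (k - r) / of_int (int p ^ (nat \<alpha> - 1))) ^ l) r (int p ^ nat \<alpha>))
    ((1 / of_nat (fact (n div p ^ (nat \<alpha> - 1)))) *
      class_sum (\<lambda>k. of_int (ibinom (int n) k) * of_int (ibinom s t) * (-1) powi k
                    * (of_int (k - r) / of_int (int p ^ (nat \<alpha> - 1))) ^ l) r (int p ^ nat \<alpha>))
    (int p)"
proof -
  interpret divided_powers p "nat \<alpha>" using assms(1) by unfold_locales
  obtain s' t' where s': "s = int s'" and t': "t = int t'"
    using assms(2,4) by (metis nonneg_eq_int)
  have "nat \<alpha> \<ge> 1" "t' < p" "s' < p" using assms(3,5,6) s' t' by simp_all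
  from class_sums_diff[OF this, of n r l] show ?thesis
    unfolding s' t' by (blast intro: qcong_if_diff_eq_prime_power_mult[OF assms(1)])
qed

end
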